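(* Let $\alpha_1,\alpha_2,\alpha_3\in\mathbb{R}$ and consider the planar system on $\{(\theta_{13},\tilde\rho_{31}):\theta_{13}\in\mathbb{R}/2\pi\mathbb{Z},\ \tilde\rho_{31}>0\}$ \[ \theta_{13}' = \frac{1}{\tilde\rho_{31}}\bigl(\sin\alpha_3+\sin\theta_{13}\bigr)-\bigl(\sin\alpha_1+\sin\alpha_2\bigr),\qquad \tilde\rho_{31}' = \tilde\rho_{31}\bigl(\cos\alpha_1+\cos\alpha_2\bigr)-\bigl(\cos\alpha_3+\cos\theta_{13}\bigr). \] (a) (Circling equilibria.) Suppose $\alpha_1+\alpha_2\equiv\pi \pmod{2\pi}$ and $\sin\alpha_1\sin\alpha_3>0$, and consider the circling equilibrium $(\theta_{13},\tilde\rho_{31})=(\pi-\alpha_3,\ \sin\alpha_3/\sin\alpha_1)$. It is locally stable if $\cos\alpha_3>0$ and unstable if $\cos\alpha_3<0$. (b) (Pure shape equilibria.) Let $\beta=(\alpha_1+\alpha_2)/2$ and suppose $\cos(\alpha_1-\beta)\cos(\alpha_3-\beta)>0$, and consider the pure shape equilibrium \[ (\theta_{13}^*,\tilde\rho_{31}^* )=\Bigl(\alpha_1+\alpha_2-\alpha_3,\ \frac{\cos(\alpha_3-\beta)}{\cos(\alpha_1-\beta)}\Bigr). \] It is locally stable if $2\cos(\alpha_1+\alpha_2-\alpha_3)+\cos\alpha_3<0$ and unstable if $2\cos(\alpha_1+\alpha_2-\alpha_3)+\cos\alpha_3>0$.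
   Context: Setting: three unit-speed agents in the plane with positions $\mathbf r_i$ and unit headings $\mathbf x_i$, $\dot{\mathbf r}_i=\mathbf x_i$, $\dot{\mathbf x}_i=u_i\mathbf x_i^{\perp}$. Agents 1 and 2 pursue each other (mutual pursuit) and agent 3 pursues agent 1, each using constant-bearing (CB) pursuit: agent $i$ maintains a fixed angle $\alpha_i$ between its heading and the line of sight to its pursuee, i.e. $R(\alpha_i)\mathbf x_i$ equals the unit vector from $\mathbf r_i$ to its pursuee's position, where $R(\beta)$ is counterclockwise rotation by $\beta$. The system is assumed to evolve on the set where all agents have attained their CB strategies. Shape variables: $\theta_{13}$ is the angle with $R(\theta_{13})\mathbf x_1=(\mathbf r_3-\mathbf r_1)/|\mathbf r_3-\mathbf r_1|$, $\rho_{31}=|\mathbf r_3-\mathbf r_1|$, $\rho_{12}=|\mathbf r_1-\mathbf r_2|$, $\tilde\rho_{31}=\rho_{31}/\rho_{12}$, and the prime denotes differentiation with respect to the rescaled time $\tau=\int_0^t \rho_{12}(s)^{-1}\,ds$. The displayed planar system is the resulting dynamics of the branch agent 3. Stability refers to local stability of the given equilibrium of this planar system. *)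

theory Defs
  imports "HOL-Analysis.Analysis"
begin

text \<open>Vector field of the branch agent 3 in shape coordinates (theta13, rho31-tilde),
  with theta13 lifted from R/2piZ to R (the field is 2pi-periodic in theta13).\<close>
definition branch_field :: "real \<Rightarrow> real \<Rightarrow> real \<Rightarrow> real \<times> real \<Rightarrow> real \<times> real" where
  "branch_field a1 a2 a3 = (\<lambda>(th, r).
     ((sin a3 + sin th) / r - (sin a1 + sin a2),
      r * (cos a1 + cos a2) - (cos a3 + cos th)))"

definition is_solution_on ::
  "(real \<times> real \<Rightarrow> real \<times> real) \<Rightarrow> real set \<Rightarrow> (real \<Rightarrow> real \<times> real) \<Rightarrow> bool" where
  "is_solution_on F I x \<longleftrightarrow>
     (\<forall>t\<in>I. snd (x t) > 0 \<and> (x has_vector_derivative F (x t)) (at t within I))"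

definition lyapunov_stable :: "(real \<times> real \<Rightarrow> real \<times> real) \<Rightarrow> real \<times> real \<Rightarrow> bool" where
  "lyapunov_stable F e \<longleftrightarrow>
     (\<forall>\<epsilon>>0. \<exists>\<delta>>0. \<forall>T x. T \<ge> 0 \<and> is_solution_on F {0..T} x \<and> dist (x 0) e < \<delta>
        \<longrightarrow> (\<forall>t\<in>{0..T}. dist (x t) e < \<epsilon>))"

definition locally_attractive :: "(real \<times> real \<Rightarrow> real \<times> real) \<Rightarrow> real \<times> real \<Rightarrow> bool" where
  "locally_attractive F e \<longleftrightarrow>
     (\<exists>\<delta>>0. \<forall>x. is_solution_on F {0..} x \<and> dist (x 0) e < \<delta> \<longrightarrow> (x \<longlongrightarrow> e) at_top)"

definition locally_stable :: "(real \<times> real \<Rightarrow> real \<times> real) \<Rightarrow> real \<times> real \<Rightarrow> bool" where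
  "locally_stable F e \<longleftrightarrow> F e = (0, 0) \<and> lyapunov_stable F e \<and> locally_attractive F e"

definition unstable :: "(real \<times> real \<Rightarrow> real \<times> real) \<Rightarrow> real \<times> real \<Rightarrow> bool" where
  "unstable F e \<longleftrightarrow> F e = (0, 0) \<and> \<not> lyapunov_stable F e"

end

(*
  At both kinds of equilibria the linearization A of the branch field has positive determinant
  (2 sin^2 a3 / r^2, resp. 2 cos^2 (a1 - b)), and its trace is a positive multiple of -cos a3,
  resp. of 2 cos (a1 + a2 - a3) + cos a3.  For a planar matrix with det A > 0 the quadratic form
  V z = det A |z|^2 + |A z|^2 changes along z' = A z at the rate 2 (tr A) |A z|^2 (Cayley-Hamilton),
  and |A z|^2 >= (det A)^2 / |A|^2 |z|^2 lets this rate dominate the superlinear remainder of the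
  nonlinear field near the equilibrium.  So V decays exponentially along solutions if tr A < 0
  (asymptotic stability) and grows exponentially if tr A > 0 (instability).  The solutions that
  witness instability come from Picard iteration for a globally Lipschitz extension of the field
  that agrees with it on a small ball around the equilibrium.
*)
theory Submission
  imports Defs
begin

section \<open>Solutions of Lipschitz differential equations\<close>

definition solves_on :: "('a::real_normed_vector \<Rightarrow> 'a) \<Rightarrow> real set \<Rightarrow> (real \<Rightarrow> 'a) \<Rightarrow> bool" where
  "solves_on G I y \<longleftrightarrow> (\<forall>t\<in>I. (y has_vector_derivative G (y t)) (at t within I))"

lemma solves_on_subset: "solves_on G I y \<Longrightarrow> J \<subseteq> I \<Longrightarrow> solves_on G J y"
  unfolding solves_on_def using has_vector_derivative_within_subset by blast

lemma solves_on_continuous_on: "solves_on G I y \<Longrightarrow> continuous_on I y"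
  unfolding solves_on_def
  using has_vector_derivative_continuous continuous_on_eq_continuous_within by blast

lemma solves_on_eq: "solves_on G I y \<Longrightarrow> (\<And>t. t \<in> I \<Longrightarrow> G (y t) = F (y t)) \<Longrightarrow> solves_on F I y"
  unfolding solves_on_def by simp

lemma is_solution_on_iff: "is_solution_on F I x \<longleftrightarrow> solves_on F I x \<and> (\<forall>t\<in>I. snd (x t) > 0)"
  unfolding is_solution_on_def solves_on_def by blast

text \<open>The Picard integral operator on \<open>[0, h]\<close>, made constant outside \<open>[0, h]\<close> by \<open>clamp\<close>
  so that it acts on the Banach space of bounded continuous functions on the whole line.\<close>
definition picard_step ::
  "('a::banach \<Rightarrow> 'a) \<Rightarrow> 'a \<Rightarrow> real \<Rightarrow> (real \<Rightarrow>\<^sub>C 'a) \<Rightarrow> real \<Rightarrow>\<^sub>C 'a" where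
  "picard_step G x0 h f = Bcontfun (\<lambda>t. x0 + integral {0..clamp 0 h t} (\<lambda>s. G (apply_bcontfun f s)))"

lemma picard_step_apply:
  fixes G :: "'a::banach \<Rightarrow> 'a"
  assumes G: "continuous_on UNIV G" and h: "0 \<le> h"
  shows "apply_bcontfun (picard_step G x0 h f) t = x0 + integral {0..clamp 0 h t} (\<lambda>s. G (apply_bcontfun f s))"
proof -
  define P where "P t = x0 + integral {0..t} (\<lambda>s. G (apply_bcontfun f s))" for t
  have Gf: "continuous_on A (\<lambda>s. G (apply_bcontfun f s))" for A
    by (rule continuous_on_compose2[OF G]) auto
  have "(P has_vector_derivative G (apply_bcontfun f t)) (at t within {0..h})" if "t \<in> {0..h}" for t
    unfolding P_def by (rule derivative_eq_intros integral_has_vector_derivative[OF Gf that] | simp)+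
  then have "continuous_on {0..h} P"
    using continuous_on_eq_continuous_within has_vector_derivative_continuous by blast
  then have P: "continuous_on (cbox 0 h) P" by simp
  have "continuous_on UNIV (\<lambda>t. P (clamp 0 h t))" by (rule clamp_continuous_on[OF P])
  moreover have "bounded (range (\<lambda>t. P (clamp 0 h t)))"
    by (rule clamp_bounded[OF compact_imp_bounded[OF compact_continuous_image[OF P compact_cbox]]])
  ultimately have "(\<lambda>t. P (clamp 0 h t)) \<in> bcontfun" unfolding bcontfun_def by simp
  moreover have "picard_step G x0 h f = Bcontfun (\<lambda>t. P (clamp 0 h t))"
    by (simp add: picard_step_def P_def)
  ultimately show ?thesis by (simp add: Bcontfun_inverse P_def)
qed

lemma picard_step_has_vector_derivative:
  fixes G :: "'a::banach \<Rightarrow> 'a"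
  assumes G: "continuous_on UNIV G" and t: "t \<in> {0..h}"
  shows "(apply_bcontfun (picard_step G x0 h f) has_vector_derivative G (apply_bcontfun f t))
    (at t within {0..h})"
proof (rule has_vector_derivative_transform[OF t])
  have "continuous_on {0..h} (\<lambda>s. G (apply_bcontfun f s))"
    by (rule continuous_on_compose2[OF G]) auto
  then show "((\<lambda>t. x0 + integral {0..t} (\<lambda>s. G (apply_bcontfun f s))) has_vector_derivative
      G (apply_bcontfun f t)) (at t within {0..h})"
    using integral_has_vector_derivative[OF _ t] by (auto intro!: derivative_eq_intros)
  show "apply_bcontfun (picard_step G x0 h f) s = x0 + integral {0..s} (\<lambda>s. G (apply_bcontfun f s))"
    if "s \<in> {0..h}" for s
    using that t by (simp add: picard_step_apply[OF G])
qed

lemma picard_step_contraction: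
  fixes G :: "'a::banach \<Rightarrow> 'a"
  assumes lip: "L-lipschitz_on UNIV G" and h: "0 \<le> h"
  shows "dist (picard_step G x0 h f) (picard_step G x0 h g) \<le> L * h * dist f g"
proof (rule dist_bound)
  fix t
  have G: "continuous_on UNIV G" by (rule lipschitz_on_continuous_on[OF lip])
  have Gf: "continuous_on A (\<lambda>s. G (apply_bcontfun f s))" "continuous_on A (\<lambda>s. G (apply_bcontfun g s))" for A
    by (rule continuous_on_compose2[OF G], auto)+
  define c where "c = clamp 0 h t"
  have c: "c \<in> {0..h}" using clamp_in_interval[of 0 h t] h by (simp add: c_def)
  have "dist (apply_bcontfun (picard_step G x0 h f) t) (apply_bcontfun (picard_step G x0 h g) t)
      = norm (integral {0..c} (\<lambda>s. G (apply_bcontfun f s) - G (apply_bcontfun g s)))"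
    using Gf by (simp add: picard_step_apply[OF G h] c_def dist_norm integral_diff integrable_continuous_interval)
  also have "\<dots> \<le> (L * dist f g) * (c - 0)"
  proof (rule integral_bound)
    fix s
    have "norm (G (apply_bcontfun f s) - G (apply_bcontfun g s))
        \<le> L * dist (apply_bcontfun f s) (apply_bcontfun g s)"
      using lipschitz_on_normD[OF lip] by (simp add: dist_norm)
    also have "\<dots> \<le> L * dist f g"
      using dist_bounded lipschitz_on_nonneg[OF lip] by (intro mult_left_mono) auto
    finally show "norm (G (apply_bcontfun f s) - G (apply_bcontfun g s)) \<le> L * dist f g" .
  next
    show "continuous_on {0..c} (\<lambda>s. G (apply_bcontfun f s) - G (apply_bcontfun g s))"
      by (intro continuous_on_diff Gf)
  qed (use c in simp)
  also have "\<dots> \<le> (L * dist f g) * h"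
    using c lipschitz_on_nonneg[OF lip] by (intro mult_left_mono) auto
  also have "\<dots> = L * h * dist f g" by (simp add: ac_simps)
  finally show "dist (apply_bcontfun (picard_step G x0 h f) t) (apply_bcontfun (picard_step G x0 h g) t)
      \<le> L * h * dist f g" .
qed

lemma lipschitz_ode_short_time_solution:
  fixes G :: "'a::banach \<Rightarrow> 'a"
  assumes L: "L > 0" and lip: "L-lipschitz_on UNIV G"
  shows "\<exists>y. y 0 = x0 \<and> solves_on G {0..1/(2*L)} y"
proof -
  define h where "h = 1/(2*L)"
  have h: "0 \<le> h" "L * h = 1/2" using L by (simp_all add: h_def)
  have G: "continuous_on UNIV G" by (rule lipschitz_on_continuous_on[OF lip])
  obtain f where fixed: "picard_step G x0 h f = f"
    using banach_fix_type[of "1/2" "picard_step G x0 h"] picard_step_contraction[OF lip h(1)] h(2)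
    by auto
  have "solves_on G {0..h} (apply_bcontfun f)"
    unfolding solves_on_def using picard_step_has_vector_derivative[OF G, of _ h x0 f] fixed by simp
  moreover have "apply_bcontfun f 0 = x0"
    using picard_step_apply[OF G h(1), of x0 f 0] fixed h(1) by simp
  ultimately show ?thesis unfolding h_def by blast
qed

lemma solves_on_append:
  assumes y: "solves_on G {0..a} y" and z: "solves_on G {0..h} z" and "z 0 = y a"
    and "0 \<le> a" "0 \<le> h"
  shows "solves_on G {0..a+h} (\<lambda>t. if t \<in> {0..a} then y t else z (t - a))"
  unfolding solves_on_def
proof
  fix t assume t: "t \<in> {0..a+h}"
  have meet: "closure {0..a} \<inter> closure {a..a+h} = {a}" using assms by auto
  have z_shift: "((\<lambda>t. z (t - a)) has_vector_derivative G (z (t - a))) (at t within {a..a+h})"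
    if t: "t \<in> {a..a+h}" for t
  proof -
    have "(\<lambda>t. t - a) ` {a..a+h} = {0..h}" by (simp add: image_diff_atLeastAtMost)
    then have "(z has_vector_derivative G (z (t - a))) (at (t - a) within (\<lambda>t. t - a) ` {a..a+h})"
      using z t unfolding solves_on_def by auto
    moreover have "((\<lambda>t. t - a) has_vector_derivative 1) (at t within {a..a+h})"
      by (rule derivative_eq_intros | simp)+
    ultimately show ?thesis using vector_diff_chain_within by (fastforce simp: o_def)
  qed
  have "((\<lambda>t. if t \<in> {0..a} then y t else z (t - a)) has_vector_derivative
      (if t \<in> {0..a} then G (y t) else G (z (t - a)))) (at t within {0..a+h})"
  proof (rule has_vector_derivative_If_within_closures[where T="{a..a+h}"])
    show "t \<in> {0..a} \<union> {a..a+h}" "{0..a+h} = {0..a} \<union> {a..a+h}" using t assms by auto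
    show "(y has_vector_derivative G (y t)) (at t within {0..a} \<union> (closure {0..a} \<inter> closure {a..a+h}))"
      if "t \<in> {0..a} \<union> (closure {0..a} \<inter> closure {a..a+h})"
      using that y assms unfolding meet solves_on_def by (auto simp: insert_absorb)
    show "((\<lambda>t. z (t - a)) has_vector_derivative G (z (t - a)))
        (at t within {a..a+h} \<union> (closure {0..a} \<inter> closure {a..a+h}))"
      if "t \<in> {a..a+h} \<union> (closure {0..a} \<inter> closure {a..a+h})"
      using that z_shift assms unfolding meet by (auto simp: insert_absorb)
  qed (use meet assms in auto)
  then show "((\<lambda>t. if t \<in> {0..a} then y t else z (t - a)) has_vector_derivative
      G (if t \<in> {0..a} then y t else z (t - a))) (at t within {0..a+h})"
    by (simp add: if_distrib)
qed

lemma lipschitz_ode_solution: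
  fixes G :: "'a::banach \<Rightarrow> 'a"
  assumes lip: "L-lipschitz_on UNIV G" and T: "0 \<le> T"
  shows "\<exists>y. y 0 = x0 \<and> solves_on G {0..T} y"
proof -
  define h where "h = 1/(2*(L+1))"
  have L1: "L + 1 > 0" using lipschitz_on_nonneg[OF lip] by simp
  have lip1: "(L+1)-lipschitz_on UNIV G" by (rule lipschitz_on_le[OF lip]) simp
  have h0: "h > 0" using L1 by (simp add: h_def)
  have steps: "\<exists>y. y 0 = x0 \<and> solves_on G {0..real n * h} y" for n x0
  proof (induction n arbitrary: x0)
    case 0
    show ?case
    proof -
      obtain y where "y 0 = x0" "solves_on G {0..h} y"
        using lipschitz_ode_short_time_solution[OF L1 lip1] unfolding h_def by blast
      then show ?thesis using solves_on_subset h0 by (metis atLeastAtMost_singleton empty_subsetI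
        insert_subset atLeastAtMost_iff less_imp_le of_nat_0 mult_zero_left order_refl)
    qed
  next
    case (Suc n)
    obtain y where y: "y 0 = x0" "solves_on G {0..real n * h} y" using Suc.IH by blast
    obtain z where z: "z 0 = y (real n * h)" "solves_on G {0..h} z"
      using lipschitz_ode_short_time_solution[OF L1 lip1] unfolding h_def by blast
    show ?case
      using solves_on_append[OF y(2) z(2) z(1)] y(1) h0
      by (intro exI[of _ "\<lambda>t. if t \<in> {0..real n * h} then y t else z (t - real n * h)"])
        (auto simp: distrib_right add.commute)
  qed
  obtain n :: nat where "T / h \<le> real n" using real_arch_simple by blast
  then have "{0..T} \<subseteq> {0..real n * h}" using h0 by (auto simp: field_simps)
  then show ?thesis using steps[of x0 n] solves_on_subset by blast
qed

lemma lipschitz_on_comp_closest_point: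
  fixes F :: "'a::euclidean_space \<Rightarrow> 'b::metric_space"
  assumes lip: "L-lipschitz_on (cball e \<rho>) F" and r: "0 < r" "r \<le> \<rho>"
  shows "L-lipschitz_on UNIV (\<lambda>p. F (closest_point (cball e r) p))"
proof -
  have "1-lipschitz_on UNIV (closest_point (cball e r))"
    using closest_point_lipschitz[of "cball e r"] r by (intro lipschitz_onI) auto
  moreover have "closest_point (cball e r) ` UNIV \<subseteq> cball e r"
    using r by (intro image_subsetI closest_point_in_set) auto
  then have "closest_point (cball e r) ` UNIV \<subseteq> cball e \<rho>"
    using subset_cball[OF r(2)] by (rule order_trans)
  ultimately show ?thesis
    using lipschitz_on_compose2[of 1 UNIV "closest_point (cball e r)" L F] lipschitz_on_subset[OF lip]
    by simp
qed

section \<open>Differential inequalities and exit times\<close>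

lemma gronwall_exp_bound:
  fixes g g' :: "real \<Rightarrow> real"
  assumes t: "0 \<le> t" "t \<le> T"
    and g: "\<forall>s\<in>{0..T}. (g has_real_derivative g' s) (at s within {0..T})"
    and ineq: "\<And>s. 0 < s \<Longrightarrow> s < t \<Longrightarrow> g' s \<le> c * g s"
  shows "g t \<le> exp (c * t) * g 0"
proof -
  define h where "h s = exp (- c * s) * g s" for s
  have h': "\<forall>s\<in>{0..T}. (h has_real_derivative exp (- c * s) * (g' s - c * g s)) (at s within {0..T})"
    unfolding h_def using g by (auto intro!: derivative_eq_intros simp: algebra_simps)
  have "h t \<le> h 0"
  proof (rule DERIV_nonpos_imp_decreasing_open[OF t(1)])
    fix s assume s: "0 < s" "s < t"
    then have "at s within {0..T} = at s" using t by (intro at_within_interior) auto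
    then have "(h has_real_derivative exp (- c * s) * (g' s - c * g s)) (at s)"
      using h' s t by (metis atLeastAtMost_iff less_imp_le order.trans)
    moreover have "exp (- c * s) * (g' s - c * g s) \<le> 0"
      using ineq[OF s] by (simp add: mult_nonneg_nonpos)
    ultimately show "\<exists>y. (h has_real_derivative y) (at s) \<and> y \<le> 0" by blast
  next
    have "continuous_on {0..T} h"
      using h' DERIV_continuous continuous_on_eq_continuous_within by blast
    then show "continuous_on {0..t} h" by (rule continuous_on_subset) (use t in auto)
  qed
  then show ?thesis by (simp add: h_def exp_minus field_simps)
qed

lemma first_exit_time:
  fixes x :: "real \<Rightarrow> 'a::real_normed_vector"
  assumes cont: "continuous_on {0..T} x" and T: "0 \<le> T"
    and exit: "\<exists>t\<in>{0..T}. norm (x t - e) \<ge> r" and start: "norm (x 0 - e) < r"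
  obtains t1 where "t1 \<in> {0<..T}" "norm (x t1 - e) = r" "\<And>s. s \<in> {0..<t1} \<Longrightarrow> norm (x s - e) < r"
proof -
  have cnorm: "continuous_on {0..T} (\<lambda>s. norm (x s - e))" by (intro continuous_intros cont)
  define S where "S = {0..T} \<inter> (\<lambda>s. norm (x s - e)) -` {r..}"
  have "closed S" unfolding S_def by (rule continuous_closed_preimage[OF cnorm]) auto
  moreover have "S \<noteq> {}" "bdd_below S" using exit by (auto simp: S_def bdd_below_def)
  ultimately have t1S: "Inf S \<in> S" by (intro closed_contains_Inf)
  then have t1_pos: "Inf S > 0" using start by (fastforce simp: S_def less_le)
  have before: "norm (x s - e) < r" if "s \<in> {0..<Inf S}" for s
  proof (rule ccontr)
    assume "\<not> norm (x s - e) < r"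
    then have "s \<in> S" using that t1S by (auto simp: S_def)
    then show False using cInf_lower[OF _ \<open>bdd_below S\<close>] that by fastforce
  qed
  have "{0..Inf S} = closure {0..<Inf S}" using t1_pos by simp
  also have "\<dots> \<subseteq> {0..T} \<inter> (\<lambda>s. norm (x s - e)) -` {..r}"
    using before t1S by (intro closure_minimal continuous_closed_preimage[OF cnorm])
      (auto simp: S_def less_imp_le)
  finally have "norm (x (Inf S) - e) \<le> r" using t1_pos by (auto simp: subset_eq)
  then show ?thesis using that[of "Inf S"] t1S t1_pos before by (force simp: S_def)
qed

lemma tendsto_of_norm_sq_exp_bound:
  fixes x :: "real \<Rightarrow> 'a::real_normed_vector"
  assumes k: "k > 0" and bound: "\<And>t. t \<ge> 0 \<Longrightarrow> norm (x t - e) ^ 2 \<le> c * exp (- k * t)"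
  shows "(x \<longlongrightarrow> e) at_top"
proof -
  have "LIM t at_top. - k * t :> at_bot"
    by (rule filterlim_tendsto_neg_mult_at_bot[OF tendsto_const _ filterlim_ident]) (use k in simp)
  then have "((\<lambda>t. exp (- k * t)) \<longlongrightarrow> 0) at_top"
    by (rule filterlim_compose[OF exp_at_bot])
  then have "((\<lambda>t. c * exp (- k * t)) \<longlongrightarrow> 0) at_top"
    by (rule tendsto_mult_right_zero)
  then have "((\<lambda>t. norm (x t - e) ^ 2) \<longlongrightarrow> 0) at_top"
  proof (rule tendsto_sandwich[OF _ _ tendsto_const, rotated 2])
    show "\<forall>\<^sub>F t in at_top. norm (x t - e) ^ 2 \<le> c * exp (- k * t)"
      using bound by (rule eventually_at_top_linorderI)
  qed simp
  from tendsto_real_sqrt[OF this] have "((\<lambda>t. norm (x t - e)) \<longlongrightarrow> 0) at_top"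
    by simp
  then show ?thesis by (simp add: tendsto_norm_zero_iff LIM_zero_iff)
qed

lemma exp_growth_exceeds:
  fixes k v M :: real
  assumes "k > 0" "v > 0"
  shows "\<exists>T\<ge>0. M < exp (k * T) * v"
proof (intro exI conjI)
  define T where "T = max 0 M / (v * k)"
  show "T \<ge> 0" using assms by (simp add: T_def)
  have "M \<le> k * T * v" using assms by (simp add: T_def)
  also have "\<dots> < (1 + k * T) * v" using assms by simp
  also have "\<dots> \<le> exp (k * T) * v" using assms exp_ge_add_one_self[of "k * T"] by simp
  finally show "M < exp (k * T) * v" .
qed

lemma quadratic_small_near_zero:
  assumes "0 < m" "0 < M" "0 < r"
  shows "\<exists>\<delta>>0. \<forall>z::'a::real_normed_vector. norm z < \<delta> \<longrightarrow> M * norm z ^ 2 < m * r ^ 2"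
proof (intro exI[of _ "r * sqrt (m / M)"] conjI allI impI)
  show "r * sqrt (m / M) > 0" using assms by simp
  fix z :: 'a assume "norm z < r * sqrt (m / M)"
  then have "norm z ^ 2 < (r * sqrt (m / M)) ^ 2" by (simp add: power_strict_mono)
  also have "\<dots> = r ^ 2 * m / M" using assms by (simp add: power_mult_distrib)
  finally show "M * norm z ^ 2 < m * r ^ 2" using assms by (simp add: field_simps)
qed

section \<open>A quadratic Lyapunov function for planar linear maps\<close>

locale mat2 =
  fixes a b c d :: real
begin

definition A :: "real \<times> real \<Rightarrow> real \<times> real" where
  "A z = (a * fst z + b * snd z, c * fst z + d * snd z)"

definition detA :: real where "detA = a * d - b * c"
definition trA :: real where "trA = a + d"
definition sqnormA :: real where "sqnormA = a\<^sup>2 + b\<^sup>2 + c\<^sup>2 + d\<^sup>2"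

definition V :: "real \<times> real \<Rightarrow> real" where
  "V z = detA * norm z ^ 2 + norm (A z) ^ 2"

definition DV :: "real \<times> real \<Rightarrow> real \<times> real \<Rightarrow> real" where
  "DV z v = 2 * detA * (z \<bullet> v) + 2 * (A z \<bullet> A v)"

lemma sqnormA_nonneg: "0 \<le> sqnormA"
  by (simp add: sqnormA_def)

lemma bounded_linear_A: "bounded_linear A"
  unfolding A_def by (intro bounded_linear_intros)

lemma A_add: "A (z + w) = A z + A w"
  by (simp add: A_def algebra_simps)

lemma norm_A_sq_le: "norm (A z) ^ 2 \<le> sqnormA * norm z ^ 2"
proof -
  have row: "(p * fst z + q * snd z)\<^sup>2 \<le> (p\<^sup>2 + q\<^sup>2) * norm z ^ 2" for p q
    using Cauchy_Schwarz_ineq[of "(p, q)" z]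
    by (cases z) (simp add: inner_prod_def power2_norm_eq_inner[symmetric] norm_Pair power2_eq_square)
  have "norm (A z) ^ 2 = (a * fst z + b * snd z)\<^sup>2 + (c * fst z + d * snd z)\<^sup>2"
    by (simp add: A_def norm_Pair)
  also have "\<dots> \<le> (a\<^sup>2 + b\<^sup>2) * norm z ^ 2 + (c\<^sup>2 + d\<^sup>2) * norm z ^ 2"
    by (intro add_mono row)
  finally show ?thesis by (simp add: sqnormA_def algebra_simps)
qed

lemma det_norm_sq_le: "detA\<^sup>2 * norm z ^ 2 \<le> sqnormA * norm (A z) ^ 2"
proof -
  \<comment> \<open>the adjugate matrix inverts \<open>A\<close> up to the factor \<open>detA\<close>\<close>
  have adj: "mat2.A d (-b) (-c) a (A z) = detA *\<^sub>R z"
    by (cases z) (simp add: A_def mat2.A_def detA_def algebra_simps)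
  have "detA\<^sup>2 * norm z ^ 2 = norm (mat2.A d (-b) (-c) a (A z)) ^ 2"
    by (simp only: adj norm_scaleR power_mult_distrib power2_abs)
  also have "\<dots> \<le> mat2.sqnormA d (-b) (-c) a * norm (A z) ^ 2"
    by (rule mat2.norm_A_sq_le)
  finally show ?thesis by (simp add: sqnormA_def mat2.sqnormA_def algebra_simps)
qed

lemma cayley_hamilton: "A (A z) = trA *\<^sub>R A z - detA *\<^sub>R z"
  by (cases z) (simp add: A_def trA_def detA_def algebra_simps)

lemma DV_A: "DV z (A z) = 2 * trA * norm (A z) ^ 2"
  unfolding DV_def cayley_hamilton inner_diff_right inner_scaleR_right power2_norm_eq_inner
  by (simp add: inner_commute[of z "A z"] algebra_simps)

lemma DV_add: "DV z (v + w) = DV z v + DV z w"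
  by (simp add: DV_def A_add inner_add_right algebra_simps)

lemma abs_DV_le: "\<bar>DV z v\<bar> \<le> (2 * \<bar>detA\<bar> + 2 * sqnormA) * norm z * norm v"
proof -
  have norm_A: "norm (A w) \<le> sqrt sqnormA * norm w" for w
  proof -
    have "norm (A w) \<le> sqrt (sqnormA * norm w ^ 2)" by (rule real_le_rsqrt[OF norm_A_sq_le])
    then show ?thesis by (simp add: real_sqrt_mult)
  qed
  have "\<bar>DV z v\<bar> \<le> 2 * \<bar>detA\<bar> * \<bar>z \<bullet> v\<bar> + 2 * \<bar>A z \<bullet> A v\<bar>"
    unfolding DV_def by (rule order_trans[OF abs_triangle_ineq]) (simp only: abs_mult abs_numeral mult.assoc order.refl)
  also have "\<dots> \<le> 2 * \<bar>detA\<bar> * (norm z * norm v) + 2 * (norm (A z) * norm (A v))"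
    by (intro add_mono mult_left_mono Cauchy_Schwarz_ineq2) auto
  also have "norm (A z) * norm (A v) \<le> (sqrt sqnormA * norm z) * (sqrt sqnormA * norm v)"
    using sqnormA_nonneg by (intro mult_mono norm_A) auto
  finally show ?thesis using sqnormA_nonneg by (simp add: algebra_simps)
qed

lemma V_ge: "detA * norm z ^ 2 \<le> V z"
  by (simp add: V_def)

lemma V_le: "0 \<le> detA \<Longrightarrow> V z \<le> (detA + sqnormA) * norm z ^ 2"
  using norm_A_sq_le[of z] by (simp add: V_def algebra_simps)

lemma V_has_real_derivative:
  assumes "(x has_vector_derivative v) (at t within S)"
  shows "((\<lambda>s. V (x s - e)) has_real_derivative DV (x t - e) v) (at t within S)"
proof -
  have x: "((\<lambda>s. x s - e) has_derivative (\<lambda>h. h *\<^sub>R v)) (at t within S)"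
    using assms by (auto simp: has_vector_derivative_def intro!: derivative_eq_intros)
  have Ax: "((\<lambda>s. A (x s - e)) has_derivative (\<lambda>h. A (h *\<^sub>R v))) (at t within S)"
    by (rule bounded_linear.has_derivative[OF bounded_linear_A x])
  have "((\<lambda>s. V (x s - e)) has_derivative
      (\<lambda>h. detA * ((x t - e) \<bullet> (h *\<^sub>R v) + (h *\<^sub>R v) \<bullet> (x t - e)) +
         (A (x t - e) \<bullet> A (h *\<^sub>R v) + A (h *\<^sub>R v) \<bullet> A (x t - e)))) (at t within S)"
    unfolding V_def power2_norm_eq_inner
    by (intro has_derivative_add has_derivative_mult_right has_derivative_inner x Ax)
  moreover have "(\<lambda>h. detA * ((x t - e) \<bullet> (h *\<^sub>R v) + (h *\<^sub>R v) \<bullet> (x t - e)) +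
         (A (x t - e) \<bullet> A (h *\<^sub>R v) + A (h *\<^sub>R v) \<bullet> A (x t - e))) = (\<lambda>h. DV (x t - e) v * h)"
    using linear_cmul[OF bounded_linear.linear[OF bounded_linear_A]]
    by (simp add: fun_eq_iff DV_def inner_commute algebra_simps)
  ultimately show ?thesis by (simp add: has_field_derivative_def)
qed

end

locale mat2_pos_det = mat2 +
  assumes det_pos: "a * d - b * c > 0"
begin

lemma detA_pos: "detA > 0"
  using det_pos by (simp add: detA_def)

lemma sqnormA_pos: "sqnormA > 0"
proof -
  have "2 * (a * d) \<le> a\<^sup>2 + d\<^sup>2" "- 2 * (b * c) \<le> b\<^sup>2 + c\<^sup>2"
    using sum_squares_bound[of a d] sum_squares_bound[of b "-c"] by (simp_all add: algebra_simps)
  then show ?thesis using det_pos by (simp add: sqnormA_def)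
qed

lemma V_nonneg: "0 \<le> V z"
  using V_ge[of z] detA_pos by (smt (verit) mult_nonneg_nonneg zero_le_power2)

lemma sgn_trA_DV_ge:
  assumes tr: "trA \<noteq> 0"
    and close: "(2 * detA + 2 * sqnormA) * norm (w - A z) \<le> \<bar>trA\<bar> * (detA\<^sup>2 / sqnormA) * norm z"
  shows "\<bar>trA\<bar> * (detA\<^sup>2 / sqnormA) * norm z ^ 2 \<le> sgn trA * DV z w"
proof -
  define \<mu> where "\<mu> = detA\<^sup>2 / sqnormA"
  define R where "R = w - A z"
  have "\<bar>sgn trA * DV z R\<bar> \<le> norm z * ((2 * detA + 2 * sqnormA) * norm R)"
    using abs_DV_le[of z R] detA_pos tr by (simp add: abs_mult ac_simps)
  also have "\<dots> \<le> norm z * (\<bar>trA\<bar> * \<mu> * norm z)"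
    using close by (intro mult_left_mono) (simp_all add: R_def \<mu>_def)
  finally have err: "\<bar>sgn trA * DV z R\<bar> \<le> \<bar>trA\<bar> * \<mu> * norm z ^ 2"
    by (simp add: power2_eq_square ac_simps)
  have "\<mu> * norm z ^ 2 \<le> norm (A z) ^ 2"
    using det_norm_sq_le[of z] sqnormA_pos by (simp add: \<mu>_def pos_divide_le_eq mult.commute)
  then have "\<bar>trA\<bar> * \<mu> * norm z ^ 2 \<le> \<bar>trA\<bar> * norm (A z) ^ 2"
    unfolding mult.assoc by (rule mult_left_mono) simp
  moreover have "sgn trA * DV z w = 2 * \<bar>trA\<bar> * norm (A z) ^ 2 + sgn trA * DV z R"
  proof -
    have "DV z w = 2 * trA * norm (A z) ^ 2 + DV z R"
      using DV_add[of z "A z" R] by (simp add: R_def DV_A)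
    then show ?thesis
      using tr by (cases "trA > 0") (simp_all add: abs_of_pos abs_of_neg algebra_simps)
  qed
  ultimately show ?thesis using err unfolding \<mu>_def by linarith
qed

lemma V_lyapunov_near_equilibrium:
  fixes F :: "real \<times> real \<Rightarrow> real \<times> real"
  assumes Fe: "F e = 0" and der: "(F has_derivative A) (at e)" and tr: "trA \<noteq> 0"
  shows "\<exists>\<rho>>0. \<exists>k>0. \<forall>p. norm (p - e) < \<rho> \<longrightarrow> k * V (p - e) \<le> sgn trA * DV (p - e) (F p)"
proof -
  define \<mu> where "\<mu> = detA\<^sup>2 / sqnormA"
  define K where "K = 2 * detA + 2 * sqnormA"
  define k where "k = \<bar>trA\<bar> * \<mu> / (detA + sqnormA)"
  have \<mu>: "\<mu> > 0" and K: "K > 0" and k: "k > 0"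
    using detA_pos sqnormA_pos tr by (simp_all add: \<mu>_def K_def k_def add_pos_pos)
  have "\<bar>trA\<bar> * \<mu> / K > 0" using \<mu> K tr by simp
  then obtain \<rho> where \<rho>: "\<rho> > 0" and approx: "\<forall>p. norm (p - e) < \<rho> \<longrightarrow>
      norm (F p - F e - A (p - e)) \<le> (\<bar>trA\<bar> * \<mu> / K) * norm (p - e)"
    using der[unfolded has_derivative_at_alt] by blast
  have "k * V (p - e) \<le> sgn trA * DV (p - e) (F p)" if p: "norm (p - e) < \<rho>" for p
  proof -
    have "K * norm (F p - A (p - e)) \<le> \<bar>trA\<bar> * \<mu> * norm (p - e)"
      using approx[rule_format, OF p] K by (simp add: Fe field_simps)
    then have "\<bar>trA\<bar> * \<mu> * norm (p - e) ^ 2 \<le> sgn trA * DV (p - e) (F p)"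
      using sgn_trA_DV_ge[OF tr] unfolding \<mu>_def K_def by blast
    moreover have "k * V (p - e) \<le> k * ((detA + sqnormA) * norm (p - e) ^ 2)"
      using V_le[of "p - e"] detA_pos k by simp
    moreover have "k * ((detA + sqnormA) * norm (p - e) ^ 2) = \<bar>trA\<bar> * \<mu> * norm (p - e) ^ 2"
      using detA_pos sqnormA_pos by (simp add: k_def)
    ultimately show ?thesis by linarith
  qed
  then show ?thesis using \<rho> k by blast
qed

end

section \<open>Stability from the linearization\<close>

context mat2_pos_det
begin

lemma V_along_solution:
  "solves_on F {0..T} x \<Longrightarrow>
    \<forall>s\<in>{0..T}. ((\<lambda>s. V (x s - e)) has_real_derivative DV (x s - e) (F (x s))) (at s within {0..T})"
  unfolding solves_on_def by (auto intro: V_has_real_derivative)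

lemma V_decays_along_solution:
  fixes F :: "real \<times> real \<Rightarrow> real \<times> real"
  assumes lyap: "\<And>p. norm (p - e) < \<rho> \<Longrightarrow> DV (p - e) (F p) \<le> - k * V (p - e)" and k: "0 \<le> k"
    and sol: "solves_on F {0..T} x" and T: "0 \<le> T" and r: "0 < r" "r \<le> \<rho>"
    and start: "(detA + sqnormA) * norm (x 0 - e) ^ 2 < detA * r ^ 2"
  shows "\<forall>t\<in>{0..T}. norm (x t - e) < r \<and> V (x t - e) \<le> exp (- k * t) * V (x 0 - e)"
proof -
  have decay: "V (x t - e) \<le> exp (- k * t) * V (x 0 - e)"
    if t: "t \<in> {0..T}" and inside: "\<forall>s\<in>{0..<t}. norm (x s - e) < r" for t
  proof (rule gronwall_exp_bound[OF _ _ V_along_solution[OF sol]])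
    fix s assume "0 < s" "s < t"
    then have "norm (x s - e) < r" using inside by auto
    then show "DV (x s - e) (F (x s)) \<le> - k * V (x s - e)" using r by (intro lyap) simp
  qed (use t in auto)
  have "norm (x 0 - e) < r"
  proof (rule ccontr)
    assume "\<not> norm (x 0 - e) < r"
    then have "detA * r ^ 2 \<le> detA * norm (x 0 - e) ^ 2"
      using r detA_pos by (intro mult_left_mono power_mono) auto
    also have "\<dots> \<le> (detA + sqnormA) * norm (x 0 - e) ^ 2"
      using sqnormA_pos by (intro mult_right_mono) auto
    finally show False using start by simp
  qed
  moreover have "\<forall>t\<in>{0..T}. norm (x t - e) < r"
  proof (rule ccontr)
    assume "\<not> (\<forall>t\<in>{0..T}. norm (x t - e) < r)"
    then have "\<exists>t\<in>{0..T}. norm (x t - e) \<ge> r" by (auto simp: not_less)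
    from first_exit_time[OF solves_on_continuous_on[OF sol] T this \<open>norm (x 0 - e) < r\<close>]
    obtain t1 where t1: "t1 \<in> {0<..T}" "norm (x t1 - e) = r"
      and before: "\<And>s. s \<in> {0..<t1} \<Longrightarrow> norm (x s - e) < r" by blast
    have "detA * r ^ 2 \<le> V (x t1 - e)" using V_ge t1(2) by metis
    also have "\<dots> \<le> exp (- k * t1) * V (x 0 - e)" using t1 before by (intro decay) auto
    also have "\<dots> \<le> V (x 0 - e)" using t1 k V_nonneg by (intro mult_left_le_one_le) auto
    also have "\<dots> \<le> (detA + sqnormA) * norm (x 0 - e) ^ 2" using V_le detA_pos by simp
    finally show False using start by simp
  qed
  ultimately show ?thesis using decay by auto
qed

lemma small_initial_radius:
  assumes "r > 0"
  shows "\<exists>\<delta>>0. \<forall>z::real \<times> real. norm z < \<delta> \<longrightarrow> (detA + sqnormA) * norm z ^ 2 < detA * r ^ 2"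
  using detA_pos sqnormA_pos assms by (intro quadratic_small_near_zero) auto

lemma lyapunov_stable_if_V_decays:
  fixes F :: "real \<times> real \<Rightarrow> real \<times> real"
  assumes lyap: "\<And>p. norm (p - e) < \<rho> \<Longrightarrow> DV (p - e) (F p) \<le> - k * V (p - e)"
    and \<rho>: "\<rho> > 0" and k: "k \<ge> 0"
  shows "lyapunov_stable F e"
  unfolding lyapunov_stable_def
proof (intro allI impI)
  fix \<epsilon> :: real assume "\<epsilon> > 0"
  then obtain \<delta> where \<delta>: "\<delta> > 0"
    and start: "\<And>z::real \<times> real. norm z < \<delta> \<Longrightarrow> (detA + sqnormA) * norm z ^ 2 < detA * (min \<epsilon> \<rho>) ^ 2"
    using small_initial_radius[of "min \<epsilon> \<rho>"] \<rho> by auto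
  have "\<forall>t\<in>{0..T}. dist (x t) e < \<epsilon>"
    if "0 \<le> T" "is_solution_on F {0..T} x" "dist (x 0) e < \<delta>" for T x
    using V_decays_along_solution[OF lyap k, where x=x and T=T and r="min \<epsilon> \<rho>"]
      that \<rho> \<open>\<epsilon> > 0\<close> start[of "x 0 - e"]
    by (fastforce simp: is_solution_on_iff dist_norm)
  then show "\<exists>\<delta>>0. \<forall>T x. 0 \<le> T \<and> is_solution_on F {0..T} x \<and> dist (x 0) e < \<delta> \<longrightarrow>
      (\<forall>t\<in>{0..T}. dist (x t) e < \<epsilon>)"
    using \<delta> by blast
qed

lemma locally_attractive_if_V_decays:
  fixes F :: "real \<times> real \<Rightarrow> real \<times> real"
  assumes lyap: "\<And>p. norm (p - e) < \<rho> \<Longrightarrow> DV (p - e) (F p) \<le> - k * V (p - e)"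
    and \<rho>: "\<rho> > 0" and k: "k > 0"
  shows "locally_attractive F e"
proof -
  obtain \<delta> where \<delta>: "\<delta> > 0"
    and start: "\<And>z::real \<times> real. norm z < \<delta> \<Longrightarrow> (detA + sqnormA) * norm z ^ 2 < detA * \<rho> ^ 2"
    using small_initial_radius[OF \<rho>] by auto
  have "(x \<longlongrightarrow> e) at_top" if x: "is_solution_on F {0..} x" "dist (x 0) e < \<delta>" for x
  proof (rule tendsto_of_norm_sq_exp_bound[OF k])
    fix t :: real assume t: "t \<ge> 0"
    have "solves_on F {0..t} x"
      using x(1) solves_on_subset[of F "{0..}" x "{0..t}"] by (auto simp: is_solution_on_iff)
    then have "V (x t - e) \<le> exp (- k * t) * V (x 0 - e)"
      using V_decays_along_solution[OF lyap, where x=x and T=t and r=\<rho>] t k \<rho> start[of "x 0 - e"] x(2)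
      by (auto simp: dist_norm)
    then have "detA * norm (x t - e) ^ 2 \<le> exp (- k * t) * V (x 0 - e)"
      using V_ge[of "x t - e"] by linarith
    then show "norm (x t - e) ^ 2 \<le> V (x 0 - e) / detA * exp (- k * t)"
      using detA_pos by (simp add: field_simps)
  qed
  then show ?thesis unfolding locally_attractive_def using \<delta> by blast
qed

theorem locally_stable_if_linearization_stable:
  fixes F :: "real \<times> real \<Rightarrow> real \<times> real"
  assumes Fe: "F e = (0, 0)" and der: "(F has_derivative A) (at e)" and tr: "trA < 0"
  shows "locally_stable F e"
proof -
  obtain \<rho> k where \<rho>: "\<rho> > 0" and k: "k > 0"
    and lyap_sgn: "\<forall>p. norm (p - e) < \<rho> \<longrightarrow> k * V (p - e) \<le> sgn trA * DV (p - e) (F p)"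
    using V_lyapunov_near_equilibrium[of F e] Fe der tr by (auto simp: zero_prod_def)
  have lyap: "DV (p - e) (F p) \<le> - k * V (p - e)" if "norm (p - e) < \<rho>" for p
    using lyap_sgn[rule_format, OF that] tr by simp
  show ?thesis
    using Fe lyapunov_stable_if_V_decays[OF lyap \<rho>] locally_attractive_if_V_decays[OF lyap \<rho> k] k
    by (simp add: locally_stable_def)
qed

lemma solution_stays_in_ball_if_stable:
  fixes F G :: "real \<times> real \<Rightarrow> real \<times> real"
  assumes stable: "\<forall>T x. 0 \<le> T \<and> is_solution_on F {0..T} x \<and> dist (x 0) e < \<delta> \<longrightarrow>
      (\<forall>t\<in>{0..T}. dist (x t) e < r)"
    and G_eq: "\<And>p. p \<in> cball e r \<Longrightarrow> G p = F p" and snd_pos: "\<And>p. p \<in> cball e r \<Longrightarrow> snd p > 0"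
    and y: "solves_on G {0..T} y" and T: "0 \<le> T" and start: "dist (y 0) e < \<delta>" "norm (y 0 - e) < r"
  shows "\<forall>t\<in>{0..T}. norm (y t - e) < r"
proof (rule ccontr)
  assume "\<not> (\<forall>t\<in>{0..T}. norm (y t - e) < r)"
  then have "\<exists>t\<in>{0..T}. norm (y t - e) \<ge> r" by (auto simp: not_less)
  from first_exit_time[OF solves_on_continuous_on[OF y] T this start(2)]
  obtain t\<^sub>1 where t\<^sub>1: "t\<^sub>1 \<in> {0<..T}" "norm (y t\<^sub>1 - e) = r"
    and before: "\<And>s. s \<in> {0..<t\<^sub>1} \<Longrightarrow> norm (y s - e) < r" by blast
  have in_ball: "y s \<in> cball e r" if s: "s \<in> {0..t\<^sub>1}" for s
  proof (cases "s = t\<^sub>1")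
    case True
    then show ?thesis using t\<^sub>1(2) by (simp add: dist_norm norm_minus_commute)
  next
    case False
    then have "norm (y s - e) < r" using s by (intro before) auto
    then show ?thesis by (simp add: dist_norm norm_minus_commute)
  qed
  have "solves_on F {0..t\<^sub>1} y"
  proof (rule solves_on_eq[OF solves_on_subset[OF y]])
    show "{0..t\<^sub>1} \<subseteq> {0..T}" using t\<^sub>1(1) by auto
    show "G (y t) = F (y t)" if "t \<in> {0..t\<^sub>1}" for t using in_ball[OF that] by (rule G_eq)
  qed
  then have "is_solution_on F {0..t\<^sub>1} y"
    unfolding is_solution_on_iff using in_ball snd_pos by blast
  moreover have "0 \<le> t\<^sub>1" using t\<^sub>1(1) by simp
  ultimately have "\<forall>t\<in>{0..t\<^sub>1}. dist (y t) e < r" using stable start(1) by blast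
  then show False using t\<^sub>1 by (auto simp: dist_norm)
qed

lemma V_grows_along_solution:
  fixes F :: "real \<times> real \<Rightarrow> real \<times> real"
  assumes lyap: "\<And>p. norm (p - e) < \<rho> \<Longrightarrow> k * V (p - e) \<le> DV (p - e) (F p)"
    and sol: "solves_on F {0..T} x" and T: "0 \<le> T" and inside: "\<forall>t\<in>{0..T}. norm (x t - e) < \<rho>"
  shows "exp (k * T) * V (x 0 - e) \<le> V (x T - e)"
proof -
  have "- V (x T - e) \<le> exp (k * T) * - V (x 0 - e)"
  proof (rule gronwall_exp_bound[OF T order_refl])
    show "\<forall>s\<in>{0..T}. ((\<lambda>s. - V (x s - e)) has_real_derivative - DV (x s - e) (F (x s)))
        (at s within {0..T})"
      using V_along_solution[OF sol, where e=e] by (auto intro!: DERIV_minus)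
    fix s assume "0 < s" "s < T"
    then show "- DV (x s - e) (F (x s)) \<le> k * - V (x s - e)" using inside lyap by simp
  qed
  then show ?thesis by simp
qed

theorem unstable_if_linearization_unstable:
  fixes F :: "real \<times> real \<Rightarrow> real \<times> real"
  assumes Fe: "F e = (0, 0)" and der: "(F has_derivative A) (at e)" and tr: "trA > 0"
    and lip: "L-lipschitz_on (cball e \<rho>\<^sub>0) F" and snd_pos: "\<And>p. p \<in> cball e \<rho>\<^sub>0 \<Longrightarrow> snd p > 0"
    and \<rho>\<^sub>0: "\<rho>\<^sub>0 > 0"
  shows "unstable F e"
proof -
  obtain \<rho> k where \<rho>: "\<rho> > 0" and k: "k > 0"
    and lyap_sgn: "\<forall>p. norm (p - e) < \<rho> \<longrightarrow> k * V (p - e) \<le> sgn trA * DV (p - e) (F p)"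
    using V_lyapunov_near_equilibrium[of F e] Fe der tr by (auto simp: zero_prod_def)
  have lyap: "k * V (p - e) \<le> DV (p - e) (F p)" if "norm (p - e) < \<rho>" for p
    using lyap_sgn[rule_format, OF that] tr by simp
  define r where "r = min \<rho>\<^sub>0 (\<rho> / 2)"
  have r: "0 < r" "r \<le> \<rho>\<^sub>0" "r < \<rho>" using \<rho>\<^sub>0 \<rho> by (auto simp: r_def)
  text \<open>Solutions of \<open>F\<close> inside \<open>cball e r\<close> are obtained from those of this globally
    Lipschitz extension.\<close>
  define G where "G p = F (closest_point (cball e r) p)" for p
  have G_lip: "L-lipschitz_on UNIV G" unfolding G_def by (rule lipschitz_on_comp_closest_point[OF lip r(1,2)])
  have G_eq: "G p = F p" if "p \<in> cball e r" for p
    using that by (simp add: G_def closest_point_self)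
  have "\<not> lyapunov_stable F e"
  proof
    assume "lyapunov_stable F e"
    then obtain \<delta> where \<delta>: "\<delta> > 0" and stable: "\<forall>T x. 0 \<le> T \<and> is_solution_on F {0..T} x \<and>
        dist (x 0) e < \<delta> \<longrightarrow> (\<forall>t\<in>{0..T}. dist (x t) e < r)"
      unfolding lyapunov_stable_def using r(1) by blast
    define x\<^sub>0 where "x\<^sub>0 = e + (min \<delta> r / 2, 0)"
    have x\<^sub>0: "norm (x\<^sub>0 - e) < \<delta>" "norm (x\<^sub>0 - e) < r" "norm (x\<^sub>0 - e) > 0"
      using \<delta> r by (auto simp: x\<^sub>0_def)
    have "detA * norm (x\<^sub>0 - e) ^ 2 > 0" using detA_pos x\<^sub>0(3) by simp
    then have "V (x\<^sub>0 - e) > 0" using V_ge[of "x\<^sub>0 - e"] by linarith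
    then obtain T where T: "T \<ge> 0" and escape: "(detA + sqnormA) * r ^ 2 < exp (k * T) * V (x\<^sub>0 - e)"
      using exp_growth_exceeds[OF k] by blast
    obtain y where y0: "y 0 = x\<^sub>0" and y: "solves_on G {0..T} y"
      using lipschitz_ode_solution[OF G_lip T] by blast
    have inside: "\<forall>t\<in>{0..T}. norm (y t - e) < r"
    proof (rule solution_stays_in_ball_if_stable[OF stable G_eq _ y T])
      show "snd p > 0" if "p \<in> cball e r" for p
        using that subset_cball[OF r(2)] by (intro snd_pos) blast
      show "dist (y 0) e < \<delta>" "norm (y 0 - e) < r" using y0 x\<^sub>0 by (simp_all add: dist_norm)
    qed
    then have "solves_on F {0..T} y"
      by (intro solves_on_eq[OF y] G_eq) (auto simp: dist_norm norm_minus_commute less_imp_le)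
    then have "exp (k * T) * V (x\<^sub>0 - e) \<le> V (y T - e)"
      using V_grows_along_solution[OF lyap _ T] inside r y0 by force
    also have "\<dots> \<le> (detA + sqnormA) * norm (y T - e) ^ 2" using V_le detA_pos by simp
    also have "\<dots> \<le> (detA + sqnormA) * r ^ 2"
      using inside T detA_pos sqnormA_pos
      by (intro mult_left_mono power_mono) (auto simp: less_imp_le)
    finally show False using escape by simp
  qed
  then show ?thesis using Fe by (simp add: unstable_def)
qed

end

section \<open>The branch field\<close>

lemma abs_sin_diff_le: "\<bar>sin x - sin y\<bar> \<le> \<bar>x - y\<bar>" for x y :: real
proof -
  have "\<bar>sin x - sin y\<bar> = 2 * \<bar>sin ((x - y) / 2)\<bar> * \<bar>cos ((x + y) / 2)\<bar>"
    by (simp add: sin_diff_sin abs_mult)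
  also have "\<dots> \<le> 2 * \<bar>(x - y) / 2\<bar> * 1"
    by (intro mult_mono abs_sin_x_le_abs_x) auto
  finally show ?thesis by simp
qed

lemma abs_cos_diff_le: "\<bar>cos x - cos y\<bar> \<le> \<bar>x - y\<bar>" for x y :: real
proof -
  have "\<bar>cos x - cos y\<bar> = 2 * \<bar>sin ((x + y) / 2)\<bar> * \<bar>sin ((y - x) / 2)\<bar>"
    by (simp add: cos_diff_cos abs_mult)
  also have "\<dots> \<le> 2 * 1 * \<bar>(y - x) / 2\<bar>"
    by (intro mult_mono abs_sin_x_le_abs_x) auto
  finally show ?thesis by simp
qed

lemma abs_sin_quotient_diff_le:
  fixes a t t' r r' \<kappa> :: real
  assumes \<kappa>: "\<kappa> > 0" and r: "\<kappa> \<le> r" "\<kappa> \<le> r'"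
  shows "\<bar>(sin a + sin t) / r - (sin a + sin t') / r'\<bar> \<le> \<bar>t - t'\<bar> / \<kappa> + 2 * (\<bar>r - r'\<bar> / \<kappa>\<^sup>2)"
proof -
  have r0: "r > 0" "r' > 0" using \<kappa> r by auto
  have "\<bar>(sin t - sin t') / r\<bar> \<le> \<bar>t - t'\<bar> / r"
    using abs_sin_diff_le[of t t'] r0 by (simp add: divide_right_mono)
  also have "\<dots> \<le> \<bar>t - t'\<bar> / \<kappa>" using r \<kappa> by (intro divide_left_mono) auto
  finally have b1: "\<bar>(sin t - sin t') / r\<bar> \<le> \<bar>t - t'\<bar> / \<kappa>" .
  have "\<bar>(r' - r) / (r * r')\<bar> = \<bar>r - r'\<bar> / (r * r')"
    using r0 by (simp add: abs_minus_commute)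
  also have "\<dots> \<le> \<bar>r - r'\<bar> / \<kappa>\<^sup>2"
    using r \<kappa> by (intro divide_left_mono) (auto simp: power2_eq_square mult_mono)
  finally have "\<bar>(r' - r) / (r * r')\<bar> \<le> \<bar>r - r'\<bar> / \<kappa>\<^sup>2" .
  moreover have "\<bar>sin a + sin t'\<bar> \<le> 2" using abs_sin_le_one[of a] abs_sin_le_one[of t'] by linarith
  ultimately have b2: "\<bar>(sin a + sin t') * ((r' - r) / (r * r'))\<bar> \<le> 2 * (\<bar>r - r'\<bar> / \<kappa>\<^sup>2)"
    unfolding abs_mult by (intro mult_mono) auto
  have "(sin a + sin t) / r - (sin a + sin t') / r'
      = (sin t - sin t') / r + (sin a + sin t') * ((r' - r) / (r * r'))"
    using r0 by (simp add: field_simps)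
  then have "\<bar>(sin a + sin t) / r - (sin a + sin t') / r'\<bar>
      \<le> \<bar>(sin t - sin t') / r\<bar> + \<bar>(sin a + sin t') * ((r' - r) / (r * r'))\<bar>"
    by (simp only: abs_triangle_ineq)
  then show ?thesis using b1 b2 by linarith
qed

lemma branch_field_lipschitz_on:
  assumes \<kappa>: "\<kappa> > 0"
  shows "(1 / \<kappa> + 2 / \<kappa>\<^sup>2 + 1 + \<bar>cos a1 + cos a2\<bar>)-lipschitz_on {p. \<kappa> \<le> snd p} (branch_field a1 a2 a3)"
proof (rule lipschitz_onI)
  fix p q :: "real \<times> real" assume "p \<in> {p. \<kappa> \<le> snd p}" "q \<in> {p. \<kappa> \<le> snd p}"
  moreover obtain t r t' r' where pq: "p = (t, r)" "q = (t', r')" by fastforce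
  ultimately have r: "\<kappa> \<le> r" "\<kappa> \<le> r'" by auto
  define C where "C = cos a1 + cos a2"
  define n where "n = dist p q"
  have "n = norm (t - t', r - r')" by (simp add: n_def pq dist_norm)
  then have dt: "\<bar>t - t'\<bar> \<le> n" and dr: "\<bar>r - r'\<bar> \<le> n"
    using norm_fst_le[where x="t - t'" and y="r - r'"] norm_snd_le[where x="t - t'" and y="r - r'"]
    by simp_all
  have "\<bar>(sin a3 + sin t) / r - (sin a3 + sin t') / r'\<bar> \<le> n / \<kappa> + 2 * (n / \<kappa>\<^sup>2)"
    using abs_sin_quotient_diff_le[OF \<kappa> r, of a3 t t'] dt dr \<kappa>
    by (smt (verit) divide_right_mono mult_left_mono zero_le_power2)
  moreover have "\<bar>C * (r - r') - (cos t - cos t')\<bar> \<le> \<bar>C\<bar> * n + n"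
  proof -
    have "\<bar>C * (r - r') - (cos t - cos t')\<bar> \<le> \<bar>C\<bar> * \<bar>r - r'\<bar> + \<bar>cos t - cos t'\<bar>"
      using abs_triangle_ineq4[of "C * (r - r')" "cos t - cos t'"] by (simp add: abs_mult)
    also have "\<dots> \<le> \<bar>C\<bar> * n + n"
      using dr abs_cos_diff_le[of t t'] dt by (intro add_mono mult_left_mono) auto
    finally show ?thesis .
  qed
  moreover have "fst (branch_field a1 a2 a3 p) - fst (branch_field a1 a2 a3 q)
      = (sin a3 + sin t) / r - (sin a3 + sin t') / r'"
    by (simp add: pq branch_field_def)
  moreover have "snd (branch_field a1 a2 a3 p) - snd (branch_field a1 a2 a3 q)
      = C * (r - r') - (cos t - cos t')"
    by (simp add: pq branch_field_def C_def algebra_simps)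
  ultimately have "dist (branch_field a1 a2 a3 p) (branch_field a1 a2 a3 q) \<le> n / \<kappa> + 2 * (n / \<kappa>\<^sup>2) + (\<bar>C\<bar> * n + n)"
    by (simp add: dist_norm minus_prod_def norm_Pair)
      (smt (verit) sqrt_sum_squares_le_sum_abs)
  also have "\<dots> = (1 / \<kappa> + 2 / \<kappa>\<^sup>2 + 1 + \<bar>C\<bar>) * n" by (simp add: algebra_simps)
  finally show "dist (branch_field a1 a2 a3 p) (branch_field a1 a2 a3 q)
      \<le> (1 / \<kappa> + 2 / \<kappa>\<^sup>2 + 1 + \<bar>cos a1 + cos a2\<bar>) * dist p q"
    by (simp add: C_def n_def)
qed (use \<kappa> in simp)

lemma branch_field_has_derivative:
  assumes "r0 \<noteq> 0"
  shows "(branch_field a1 a2 a3 has_derivative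
      mat2.A (cos th0 / r0) (- (sin a3 + sin th0) / r0\<^sup>2) (sin th0) (cos a1 + cos a2)) (at (th0, r0))"
proof -
  have "branch_field a1 a2 a3 = (\<lambda>p. ((sin a3 + sin (fst p)) / snd p - (sin a1 + sin a2),
      snd p * (cos a1 + cos a2) - (cos a3 + cos (fst p))))"
    by (auto simp: branch_field_def fun_eq_iff)
  then show ?thesis
    apply simp
    apply (rule derivative_eq_intros refl | simp add: assms)+
    apply (auto simp: mat2.A_def fun_eq_iff power2_eq_square field_simps assms)
    done
qed

lemma snd_ge_in_cball:
  fixes th0 r0 \<rho> :: real
  assumes "p \<in> cball (th0, r0) \<rho>"
  shows "r0 - \<rho> \<le> snd p"
proof -
  obtain t r where p: "p = (t, r)" by fastforce
  have "\<bar>r0 - r\<bar> \<le> norm (th0 - t, r0 - r)"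
    using norm_snd_le[where x="th0 - t" and y="r0 - r"] by simp
  also have "\<dots> \<le> \<rho>" using assms by (simp add: p dist_norm)
  finally show ?thesis by (simp add: p)
qed

lemma branch_equilibrium_stability:
  fixes a1 a2 a3 th0 r0 :: real
  defines "a \<equiv> cos th0 / r0" and "b \<equiv> - (sin a3 + sin th0) / r0\<^sup>2"
    and "c \<equiv> sin th0" and "d \<equiv> cos a1 + cos a2"
  assumes r0: "r0 > 0" and eq: "branch_field a1 a2 a3 (th0, r0) = (0, 0)" and det: "a * d - b * c > 0"
  shows "(a + d < 0 \<longrightarrow> locally_stable (branch_field a1 a2 a3) (th0, r0)) \<and>
    (a + d > 0 \<longrightarrow> unstable (branch_field a1 a2 a3) (th0, r0))"
proof -
  interpret mat2_pos_det a b c d using det by unfold_locales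
  have der: "(branch_field a1 a2 a3 has_derivative A) (at (th0, r0))"
    using branch_field_has_derivative[of r0 a1 a2 a3 th0] r0 by (simp add: a_def b_def c_def d_def)
  have near: "r0 / 2 \<le> snd p" if "p \<in> cball (th0, r0) (r0 / 2)" for p
    using snd_ge_in_cball[OF that] by simp
  have "(1 / (r0 / 2) + 2 / (r0 / 2)\<^sup>2 + 1 + \<bar>cos a1 + cos a2\<bar>)-lipschitz_on
      (cball (th0, r0) (r0 / 2)) (branch_field a1 a2 a3)"
    using near r0 by (intro lipschitz_on_subset[OF branch_field_lipschitz_on]) auto
  moreover have "snd p > 0" if "p \<in> cball (th0, r0) (r0 / 2)" for p
    using near[OF that] r0 by simp
  ultimately show ?thesis
    using locally_stable_if_linearization_stable[OF eq der] r0
      unstable_if_linearization_unstable[OF eq der]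
    by (simp add: trA_def)
qed

lemma circling_equilibrium_stability:
  assumes "\<exists>k::int. a1 + a2 = pi + 2 * of_int k * pi" and "sin a1 * sin a3 > 0"
  shows "(cos a3 > 0 \<longrightarrow> locally_stable (branch_field a1 a2 a3) (pi - a3, sin a3 / sin a1)) \<and>
    (cos a3 < 0 \<longrightarrow> unstable (branch_field a1 a2 a3) (pi - a3, sin a3 / sin a1))"
proof -
  obtain k :: int where "a2 = (pi - a1) + 2 * pi * of_int k"
    using assms(1) by (auto simp: algebra_simps)
  then have "sin a2 = sin (pi - a1) \<and> cos a2 = cos (pi - a1)" using sin_cos_eq_iff by blast
  then have s2: "sin a2 = sin a1" and c2: "cos a2 = - cos a1" by auto
  define r0 where "r0 = sin a3 / sin a1"
  have r0: "r0 > 0" using assms(2) by (auto simp: r0_def zero_less_divide_iff zero_less_mult_iff)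
  have "sin a1 \<noteq> 0" "sin a3 \<noteq> 0" using assms(2) by auto
  then have eq: "branch_field a1 a2 a3 (pi - a3, r0) = (0, 0)"
    by (simp add: branch_field_def s2 c2 r0_def)
  have "(cos (pi - a3) / r0) * (cos a1 + cos a2) - (- (sin a3 + sin (pi - a3)) / r0\<^sup>2) * sin (pi - a3)
      = 2 * sin a3 ^ 2 / r0\<^sup>2"
    by (simp add: c2 power2_eq_square)
  also have "\<dots> > 0" using \<open>sin a3 \<noteq> 0\<close> r0 by simp
  finally have det: "(cos (pi - a3) / r0) * (cos a1 + cos a2)
      - (- (sin a3 + sin (pi - a3)) / r0\<^sup>2) * sin (pi - a3) > 0" .
  have tr: "cos (pi - a3) / r0 + (cos a1 + cos a2) = - (cos a3 / r0)" by (simp add: c2)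
  show ?thesis
    using branch_equilibrium_stability[OF r0 eq det] r0
    unfolding tr r0_def[symmetric] by (simp add: divide_pos_pos divide_neg_pos)
qed

lemma pure_shape_linearization:
  fixes \<beta> u v :: real
  defines "th0 \<equiv> \<beta> - v" and "r0 \<equiv> cos v / cos u"
  assumes a: "a1 = \<beta> + u" "a2 = \<beta> - u" "a3 = \<beta> + v" and c: "cos u \<noteq> 0" "cos v \<noteq> 0"
  shows "branch_field a1 a2 a3 (th0, r0) = (0, 0)"
    and "(cos th0 / r0) * (cos a1 + cos a2) - (- (sin a3 + sin th0) / r0\<^sup>2) * sin th0 = 2 * (cos u)\<^sup>2"
    and "cos th0 / r0 + (cos a1 + cos a2) = (cos u / cos v) * (2 * cos th0 + cos a3)"
proof -
  have sum12: "sin a1 + sin a2 = 2 * sin \<beta> * cos u" "cos a1 + cos a2 = 2 * cos \<beta> * cos u"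
    unfolding a(1,2) by (simp_all add: sin_add sin_diff cos_add cos_diff)
  have sum3: "sin a3 + sin th0 = 2 * sin \<beta> * cos v" "cos a3 + cos th0 = 2 * cos \<beta> * cos v"
    unfolding a(3) th0_def by (simp_all add: sin_add sin_diff cos_add cos_diff)
  have cos_v: "cos \<beta> * cos th0 + sin \<beta> * sin th0 = cos v"
    using cos_diff[of \<beta> th0] by (simp add: th0_def)
  show "branch_field a1 a2 a3 (th0, r0) = (0, 0)"
    using c by (simp add: branch_field_def sum12 sum3 r0_def)
  have "(cos th0 / r0) * (cos a1 + cos a2) - (- (sin a3 + sin th0) / r0\<^sup>2) * sin th0
      = 2 * (cos u)\<^sup>2 / cos v * (cos \<beta> * cos th0 + sin \<beta> * sin th0)"
    using c by (simp add: sum12 sum3 r0_def field_simps power2_eq_square)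
  also have "\<dots> = 2 * (cos u)\<^sup>2" using c by (simp add: cos_v)
  finally show "(cos th0 / r0) * (cos a1 + cos a2) - (- (sin a3 + sin th0) / r0\<^sup>2) * sin th0
      = 2 * (cos u)\<^sup>2" .
  have "cos a1 + cos a2 = (cos u / cos v) * (cos a3 + cos th0)" using c by (simp add: sum12 sum3)
  then show "cos th0 / r0 + (cos a1 + cos a2) = (cos u / cos v) * (2 * cos th0 + cos a3)"
    using c by (simp add: r0_def field_simps)
qed

lemma pure_shape_equilibrium_stability:
  fixes a1 a2 a3 :: real
  defines "\<beta> \<equiv> (a1 + a2) / 2"
  assumes pos: "cos (a1 - \<beta>) * cos (a3 - \<beta>) > 0"
  shows "(2 * cos (a1 + a2 - a3) + cos a3 < 0 \<longrightarrow>
      locally_stable (branch_field a1 a2 a3) (a1 + a2 - a3, cos (a3 - \<beta>) / cos (a1 - \<beta>))) \<and>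
    (2 * cos (a1 + a2 - a3) + cos a3 > 0 \<longrightarrow>
      unstable (branch_field a1 a2 a3) (a1 + a2 - a3, cos (a3 - \<beta>) / cos (a1 - \<beta>)))"
proof -
  define th0 r0 where "th0 = a1 + a2 - a3" and "r0 = cos (a3 - \<beta>) / cos (a1 - \<beta>)"
  have a: "a1 = \<beta> + (a1 - \<beta>)" "a2 = \<beta> - (a1 - \<beta>)" "a3 = \<beta> + (a3 - \<beta>)" "th0 = \<beta> - (a3 - \<beta>)"
    by (simp_all add: \<beta>_def th0_def)
  have c: "cos (a1 - \<beta>) \<noteq> 0" "cos (a3 - \<beta>) \<noteq> 0" using pos by auto
  have q: "cos (a1 - \<beta>) / cos (a3 - \<beta>) > 0" and r0: "r0 > 0"
    using pos by (auto simp: r0_def zero_less_divide_iff zero_less_mult_iff)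
  note lin = pure_shape_linearization[OF a(1-3) c, folded a(4) r0_def]
  have "(cos th0 / r0) * (cos a1 + cos a2) - (- (sin a3 + sin th0) / r0\<^sup>2) * sin th0 > 0"
    unfolding lin(2) using c by simp
  note stab = branch_equilibrium_stability[OF r0 lin(1) this, unfolded lin(3)]
  show ?thesis
    unfolding th0_def[symmetric] r0_def[symmetric]
    using stab mult_pos_neg[OF q] mult_pos_pos[OF q] by blast
qed

theorem proposition3:
  fixes a1 a2 a3 :: real
  shows
   "((\<exists>k::int. a1 + a2 = pi + 2 * of_int k * pi) \<and> sin a1 * sin a3 > 0 \<longrightarrow>
       (cos a3 > 0 \<longrightarrow> locally_stable (branch_field a1 a2 a3) (pi - a3, sin a3 / sin a1)) \<and>
       (cos a3 < 0 \<longrightarrow> unstable (branch_field a1 a2 a3) (pi - a3, sin a3 / sin a1)))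
    \<and>
    (let b = (a1 + a2) / 2;
         e = (a1 + a2 - a3, cos (a3 - b) / cos (a1 - b))
     in cos (a1 - b) * cos (a3 - b) > 0 \<longrightarrow>
       (2 * cos (a1 + a2 - a3) + cos a3 < 0 \<longrightarrow> locally_stable (branch_field a1 a2 a3) e) \<and>
       (2 * cos (a1 + a2 - a3) + cos a3 > 0 \<longrightarrow> unstable (branch_field a1 a2 a3) e))"
  using circling_equilibrium_stability[of a1 a2 a3] pure_shape_equilibrium_stability[of a1 a2 a3]
  unfolding Let_def by (intro conjI impI) blast+

end
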